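(* Let $r>0$ and $a\in[0,\frac12]$, and put $\alpha=\pi a$. Let $$\mathcal R_{r,\alpha}=\{(t\cos\theta,t\sin\theta):\ \alpha\le|\theta|\le\pi,\ t\in[0,r]\}$$ be the disk of radius $r$ centered at the origin $O$ with an angular sector of opening $2\alpha$ removed. The probability that the triangle formed by three independent uniformly distributed points of $\mathcal R_{r,\alpha}$ contains $O$ is $$\mathcal P_a=\frac{(1+a)(1-2a)^2}{4(1-a)^3}.$$ *)

theory Defs
  imports "HOL-Probability.Probability"
begin

definition cut_disk :: "real \<Rightarrow> real \<Rightarrow> (real \<times> real) set" where
  "cut_disk r \<alpha> = {(t * cos \<theta>, t * sin \<theta>) | t \<theta>.
      \<alpha> \<le> \<bar>\<theta>\<bar> \<and> \<bar>\<theta>\<bar> \<le> pi \<and> 0 \<le> t \<and> t \<le> r}"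

definition uniform_on :: "(real \<times> real) set \<Rightarrow> (real \<times> real) measure" where
  "uniform_on S = uniform_measure lborel S"

end

theory Submission
  imports Defs
begin

text \<open>
  The origin lies outside the convex hull of three points iff the points lie in a common
  open half-plane bounded by a line through the origin. Away from the null set where two of them are collinear with the origin,
  this happens iff exactly one of them is extreme, i.e. the other two lie in the open
  half-plane to its left. For i.i.d. points of law \<open>M\<close> these three events are disjoint and
  each has probability \<open>\<integral> M(H p)\<^sup>2 dM(p)\<close>, where \<open>H p\<close> is the left half-plane of \<open>p\<close>;
  hence the origin lies in the triangle with probability \<open>1 - 3 \<integral> M(H p)\<^sup>2 dM(p)\<close>.
  For the uniform law on the cut disk the polar angle is uniform on \<open>[\<alpha>, 2\<pi> - \<alpha>]\<close>, because a
  sector of angle \<open>\<theta>\<close> has area \<open>r\<^sup>2\<theta>/2\<close>. So \<open>M(H p)\<close> is the normalised length of the part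
  of that arc in the half-turn after the angle of \<open>p\<close>, and the remaining one-dimensional
  integral is elementary.
\<close>

section \<open>Half-planes through the origin\<close>

text \<open>\<open>0 < cross p q\<close> means that \<open>q\<close> lies strictly counterclockwise of \<open>p\<close>, less than a
  half-turn away.\<close>

definition cross :: "real \<times> real \<Rightarrow> real \<times> real \<Rightarrow> real" where
  "cross p q = fst p * snd q - snd p * fst q"

lemma cross_swap: "cross q p = - cross p q"
  by (simp add: cross_def)

lemma cross_pos_asym: "0 < cross p q \<Longrightarrow> 0 < cross q p \<Longrightarrow> False"
  by (simp add: cross_swap[of q p])

lemma measurable_cross [measurable]:
  "f \<in> borel_measurable N \<Longrightarrow> g \<in> borel_measurable N \<Longrightarrow> (\<lambda>x. cross (f x) (g x)) \<in> borel_measurable N"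
  by (rule borel_measurable_continuous_Pair) (simp_all add: cross_def continuous_intros)

lemma zero_in_convex_hull3_iff:
  fixes p q s :: "real \<times> real"
  shows "0 \<in> convex hull {p, q, s} \<longleftrightarrow> \<not> (\<exists>v. 0 < inner v p \<and> 0 < inner v q \<and> 0 < inner v s)"
proof
  assume "0 \<in> convex hull {p, q, s}"
  then obtain u v w where uvw: "0 \<le> u" "0 \<le> v" "0 \<le> w" "u + v + w = 1"
    and zero: "0 = u *\<^sub>R p + v *\<^sub>R q + w *\<^sub>R s"
    unfolding convex_hull_3 by auto
  show "\<not> (\<exists>v. 0 < inner v p \<and> 0 < inner v q \<and> 0 < inner v s)"
  proof
    assume "\<exists>z. 0 < inner z p \<and> 0 < inner z q \<and> 0 < inner z s"
    then obtain z where z: "0 < inner z p" "0 < inner z q" "0 < inner z s" by blast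
    have "0 < u * inner z p + v * inner z q + w * inner z s"
      using uvw z by (smt (verit) mult_nonneg_nonneg mult_pos_pos)
    also have "\<dots> = inner z (u *\<^sub>R p + v *\<^sub>R q + w *\<^sub>R s)"
      by (simp add: inner_add_right)
    finally show False using zero by simp
  qed
next
  assume no_halfplane: "\<not> (\<exists>v. 0 < inner v p \<and> 0 < inner v q \<and> 0 < inner v s)"
  show "0 \<in> convex hull {p, q, s}"
  proof (rule ccontr)
    assume "0 \<notin> convex hull {p, q, s}"
    then obtain a b where "0 < b" "\<forall>x\<in>convex hull {p, q, s}. b < inner a x"
      using separating_hyperplane_closed_0[of "convex hull {p, q, s}"]
      by (auto simp: compact_imp_closed compact_convex_hull)
    then have "0 < inner a p" "0 < inner a q" "0 < inner a s"
      using hull_subset[of "{p, q, s}" convex] by force+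
    with no_halfplane show False by blast
  qed
qed

lemma cross_pos_imp_common_halfplane:
  assumes pq: "0 < cross p q" and ps: "0 < cross p s"
  shows "\<exists>v. 0 < inner v p \<and> 0 < inner v q \<and> 0 < inner v s"
proof -
  define k where "k = 1 + \<bar>inner p q\<bar> / cross p q + \<bar>inner p s\<bar> / cross p s"
  define v where "v = p + k *\<^sub>R (- snd p, fst p)"
  have v_inner: "inner v x = inner p x + k * cross p x" for x
    by (simp add: v_def inner_prod_def cross_def algebra_simps)
  have "p \<noteq> 0" using pq by (auto simp: cross_def)
  then have "0 < inner v p"
    by (simp add: v_inner cross_def)
  moreover have "0 < inner v x" if "0 < cross p x" "x = q \<or> x = s" for x
  proof -
    have "0 \<le> \<bar>inner p q\<bar> / cross p q" "0 \<le> \<bar>inner p s\<bar> / cross p s"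
      using pq ps by simp_all
    then have "1 + \<bar>inner p x\<bar> / cross p x \<le> k"
      using that(2) unfolding k_def by (elim disjE) simp_all
    then have "(1 + \<bar>inner p x\<bar> / cross p x) * cross p x \<le> k * cross p x"
      using that(1) by (intro mult_right_mono) simp_all
    then have "\<bar>inner p x\<bar> < k * cross p x"
      using that(1) by (simp add: distrib_right)
    then show ?thesis unfolding v_inner by linarith
  qed
  ultimately show ?thesis using pq ps by blast
qed

lemma cross_pos_trans:
  assumes "0 < inner v x" "0 < inner v y" "0 < inner v z" "0 < cross x y" "0 < cross y z"
  shows "0 < cross x z"
proof -
  have "cross x z * inner v y = cross x y * inner v z + cross y z * inner v x"
    by (simp add: cross_def inner_prod_def algebra_simps)
  also have "\<dots> > 0"
    using assms by (intro add_pos_pos mult_pos_pos)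
  finally show ?thesis
    using assms(2) by (rule zero_less_mult_pos2)
qed

lemma common_halfplane_imp_extreme:
  assumes v: "0 < inner v p" "0 < inner v q" "0 < inner v s"
    and nz: "cross p q \<noteq> 0" "cross q s \<noteq> 0" "cross p s \<noteq> 0"
  shows "(0 < cross p q \<and> 0 < cross p s) \<or> (0 < cross q p \<and> 0 < cross q s) \<or>
         (0 < cross s p \<and> 0 < cross s q)"
proof -
  have swap: "0 < cross y x \<longleftrightarrow> \<not> 0 < cross x y" if "cross x y \<noteq> 0" for x y
    using that cross_swap[of y x] by auto
  note trans = cross_pos_trans[OF v(1) v(2) v(3)] cross_pos_trans[OF v(1) v(3) v(2)]
    cross_pos_trans[OF v(2) v(1) v(3)] cross_pos_trans[OF v(2) v(3) v(1)]
    cross_pos_trans[OF v(3) v(1) v(2)] cross_pos_trans[OF v(3) v(2) v(1)]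
  show ?thesis
    using trans unfolding swap[OF nz(1)] swap[OF nz(2)] swap[OF nz(3)] by blast
qed

lemma zero_notin_triangle_iff_extreme:
  assumes "cross p q \<noteq> 0" "cross q s \<noteq> 0" "cross p s \<noteq> 0"
  shows "0 \<notin> convex hull {p, q, s} \<longleftrightarrow>
    (0 < cross p q \<and> 0 < cross p s) \<or> (0 < cross q p \<and> 0 < cross q s) \<or>
    (0 < cross s p \<and> 0 < cross s q)"
  unfolding zero_in_convex_hull3_iff not_not
proof
  assume "\<exists>v. 0 < inner v p \<and> 0 < inner v q \<and> 0 < inner v s"
  then obtain v where "0 < inner v p" "0 < inner v q" "0 < inner v s" by blast
  then show "(0 < cross p q \<and> 0 < cross p s) \<or> (0 < cross q p \<and> 0 < cross q s) \<or>
      (0 < cross s p \<and> 0 < cross s q)"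
    using assms by (rule common_halfplane_imp_extreme)
next
  assume "(0 < cross p q \<and> 0 < cross p s) \<or> (0 < cross q p \<and> 0 < cross q s) \<or>
      (0 < cross s p \<and> 0 < cross s q)"
  then show "\<exists>v. 0 < inner v p \<and> 0 < inner v q \<and> 0 < inner v s"
    using cross_pos_imp_common_halfplane[of p q s] cross_pos_imp_common_halfplane[of q p s]
      cross_pos_imp_common_halfplane[of s p q]
    by (elim disjE conjE) auto
qed

definition polar_angle :: "real \<times> real \<Rightarrow> real" where
  "polar_angle p = Arg2pi (Complex (fst p) (snd p))"

definition polar :: "real \<Rightarrow> real \<Rightarrow> real \<times> real" where
  "polar \<rho> t = (\<rho> * cos t, \<rho> * sin t)"

lemma polar_angle_nonneg: "0 \<le> polar_angle p"
  and polar_angle_less: "polar_angle p < 2 * pi"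
  using Arg2pi[of "Complex (fst p) (snd p)"] by (auto simp: polar_angle_def)

lemma polar_norm_polar_angle: "polar (norm p) (polar_angle p) = p"
proof -
  have "norm p = cmod (Complex (fst p) (snd p))"
    by (cases p) (simp add: norm_Pair complex_norm)
  then show ?thesis
    using cos_Arg2pi[of "Complex (fst p) (snd p)"] sin_Arg2pi[of "Complex (fst p) (snd p)"]
    by (cases p) (simp add: polar_def polar_angle_def)
qed

lemma fst_eq_polar: "fst p = norm p * cos (polar_angle p)"
  and snd_eq_polar: "snd p = norm p * sin (polar_angle p)"
  by (metis fst_conv polar_def polar_norm_polar_angle, metis snd_conv polar_def polar_norm_polar_angle)

lemma norm_polar: "norm (polar \<rho> t) = \<bar>\<rho>\<bar>"
proof -
  have "(\<rho> * cos t)\<^sup>2 + (\<rho> * sin t)\<^sup>2 = \<rho>\<^sup>2"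
    by (simp add: power_mult_distrib flip: distrib_left)
  then show ?thesis
    by (simp add: polar_def norm_Pair)
qed

lemma polar_angle_polar:
  assumes "0 < \<rho>" "0 \<le> t" "t < 2 * pi"
  shows "polar_angle (polar \<rho> t) = t"
proof -
  have "Complex (\<rho> * cos t) (\<rho> * sin t) = of_real \<rho> * exp (\<i> * of_real t)"
    by (simp add: exp_Euler complex_eq_iff cos_of_real sin_of_real)
  with assms show ?thesis
    unfolding polar_angle_def polar_def by (intro Arg2pi_unique) auto
qed

lemma polar_add_2pi: "polar \<rho> (t + 2 * pi) = polar \<rho> t"
  and polar_diff_2pi: "polar \<rho> (t - 2 * pi) = polar \<rho> t"
  by (simp_all add: polar_def cos_diff sin_diff)

lemma cross_polar: "cross (polar a s) (polar b t) = a * b * sin (t - s)"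
  by (simp add: cross_def polar_def sin_diff algebra_simps)

lemma cross_eq_sin_polar_angle:
  "cross p q = norm p * norm q * sin (polar_angle q - polar_angle p)"
  using cross_polar[of "norm p" "polar_angle p" "norm q" "polar_angle q"]
  by (simp add: polar_norm_polar_angle)

lemma borel_measurable_polar_angle [measurable]: "polar_angle \<in> borel_measurable borel"
proof -
  have "Arg2pi \<in> borel_measurable borel"
    by (rule borel_measurable_iff_le[THEN iffD2]) (auto intro: closed_Arg2pi2pi_le borel_closed)
  moreover have "(\<lambda>p::real \<times> real. Complex (fst p) (snd p)) \<in> borel_measurable borel"
    by (intro borel_measurable_continuous_onI continuous_intros)
  ultimately show ?thesis
    unfolding polar_angle_def by (rule measurable_compose[rotated])
qed

section \<open>Three independent random points in the plane\<close>

locale planar_prob_space = prob_space M for M :: "(real \<times> real) measure" +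
  assumes sets_eq_borel [measurable_cong]: "sets M = sets borel"
    and AE_line_null: "AE p in M. emeasure M {q. cross p q = 0} = 0"
begin

interpretation MM: pair_prob_space M M
  by (simp add: pair_prob_space_def pair_sigma_finite_def prob_space_axioms prob_space_imp_sigma_finite)

interpretation MMM: pair_prob_space M "M \<Otimes>\<^sub>M M"
  by (simp add: pair_prob_space_def pair_sigma_finite_def prob_space_axioms prob_space_imp_sigma_finite
      prob_space_pair)

lemma space_eq_UNIV [simp]: "space M = UNIV"
  using sets_eq_imp_space_eq[OF sets_eq_borel] by simp

lemma Collect_in_sets_pairI: "Measurable.pred (M \<Otimes>\<^sub>M M) P \<Longrightarrow> Collect P \<in> sets (M \<Otimes>\<^sub>M M)"
  by (simp add: pred_def space_pair_measure)

lemma Collect_in_sets_tripleI: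
  "Measurable.pred (M \<Otimes>\<^sub>M M \<Otimes>\<^sub>M M) P \<Longrightarrow> Collect P \<in> sets (M \<Otimes>\<^sub>M M \<Otimes>\<^sub>M M)"
  by (simp add: pred_def space_pair_measure)

definition left_measure :: "real \<times> real \<Rightarrow> ennreal" where
  "left_measure p = emeasure M {q. 0 < cross p q}"

lemma borel_measurable_left_measure [measurable]: "left_measure \<in> borel_measurable M"
proof -
  have "(\<lambda>p. emeasure M (Pair p -` {z. 0 < cross (fst z) (snd z)})) \<in> borel_measurable M"
    by (intro measurable_emeasure_Pair Collect_in_sets_pairI) measurable
  then show ?thesis
    by (simp add: left_measure_def[abs_def] vimage_def)
qed

lemma emeasure_first_extreme:
  "emeasure (M \<Otimes>\<^sub>M M \<Otimes>\<^sub>M M) {(p, q, s). 0 < cross p q \<and> 0 < cross p s}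
     = (\<integral>\<^sup>+p. left_measure p ^ 2 \<partial>M)"
proof -
  have "emeasure (M \<Otimes>\<^sub>M M \<Otimes>\<^sub>M M) {(p, q, s). 0 < cross p q \<and> 0 < cross p s}
      = (\<integral>\<^sup>+p. emeasure (M \<Otimes>\<^sub>M M) ({q. 0 < cross p q} \<times> {s. 0 < cross p s}) \<partial>M)"
    by (subst MM.P.emeasure_pair_measure_alt)
       (auto intro!: Collect_in_sets_tripleI nn_integral_cong simp: vimage_def)
  then show ?thesis
    by (simp add: emeasure_pair_measure_Times left_measure_def power2_eq_square)
qed

lemma emeasure_pair_extreme_first:
  "emeasure (M \<Otimes>\<^sub>M M) {(q, s). 0 < cross q p \<and> 0 < cross q s}
     = (\<integral>\<^sup>+q. (if 0 < cross q p then left_measure q else 0) \<partial>M)"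
  by (subst emeasure_pair_measure_alt)
     (auto intro!: Collect_in_sets_pairI nn_integral_cong simp: vimage_def left_measure_def)

lemma emeasure_pair_extreme_second:
  "emeasure (M \<Otimes>\<^sub>M M) {(q, s). 0 < cross s p \<and> 0 < cross s q}
     = (\<integral>\<^sup>+s. (if 0 < cross s p then left_measure s else 0) \<partial>M)"
  by (subst MM.emeasure_pair_measure_alt2)
     (auto intro!: Collect_in_sets_pairI nn_integral_cong simp: vimage_def left_measure_def)

lemma nn_integral_left_measure_swap:
  "(\<integral>\<^sup>+p. \<integral>\<^sup>+q. (if 0 < cross q p then left_measure q else 0) \<partial>M \<partial>M)
     = (\<integral>\<^sup>+q. left_measure q ^ 2 \<partial>M)"
proof -
  have "(\<integral>\<^sup>+p. \<integral>\<^sup>+q. (if 0 < cross q p then left_measure q else 0) \<partial>M \<partial>M)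
      = (\<integral>\<^sup>+q. \<integral>\<^sup>+p. left_measure q * indicator {p. 0 < cross q p} p \<partial>M \<partial>M)"
    by (subst MM.Fubini') (auto intro!: nn_integral_cong)
  also have "\<dots> = (\<integral>\<^sup>+q. left_measure q ^ 2 \<partial>M)"
    by (auto intro!: nn_integral_cong simp: nn_integral_cmult_indicator left_measure_def power2_eq_square)
  finally show ?thesis .
qed

lemma emeasure_second_extreme:
  "emeasure (M \<Otimes>\<^sub>M M \<Otimes>\<^sub>M M) {(p, q, s). 0 < cross q p \<and> 0 < cross q s}
     = (\<integral>\<^sup>+p. left_measure p ^ 2 \<partial>M)"
  by (subst MM.P.emeasure_pair_measure_alt)
     (auto intro!: Collect_in_sets_tripleI simp: vimage_def emeasure_pair_extreme_first
       nn_integral_left_measure_swap)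

lemma emeasure_third_extreme:
  "emeasure (M \<Otimes>\<^sub>M M \<Otimes>\<^sub>M M) {(p, q, s). 0 < cross s p \<and> 0 < cross s q}
     = (\<integral>\<^sup>+p. left_measure p ^ 2 \<partial>M)"
  by (subst MM.P.emeasure_pair_measure_alt)
     (auto intro!: Collect_in_sets_tripleI simp: vimage_def emeasure_pair_extreme_second
       nn_integral_left_measure_swap)

lemma AE_noncollinear:
  "AE z in M \<Otimes>\<^sub>M M \<Otimes>\<^sub>M M. cross (fst z) (fst (snd z)) \<noteq> 0 \<and>
     cross (fst (snd z)) (snd (snd z)) \<noteq> 0 \<and> cross (fst z) (snd (snd z)) \<noteq> 0"
proof -
  have off_line: "AE q in M. cross p q \<noteq> 0" if "emeasure M {q. cross p q = 0} = 0" for p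
    using that by (intro AE_I'[of "{q. cross p q = 0}"]) (auto simp: null_sets_def)
  have "AE p in M. AE x in M \<Otimes>\<^sub>M M.
      cross p (fst x) \<noteq> 0 \<and> cross (fst x) (snd x) \<noteq> 0 \<and> cross p (snd x) \<noteq> 0"
    using AE_line_null
  proof eventually_elim
    case (elim p)
    have ae: "AE q in M. AE s in M. cross p q \<noteq> 0 \<and> cross q s \<noteq> 0 \<and> cross p s \<noteq> 0"
      using off_line[OF elim] AE_line_null
    proof eventually_elim
      case (elim q)
      from off_line[OF elim(2)] off_line[OF \<open>emeasure M {q. cross p q = 0} = 0\<close>]
      show ?case by eventually_elim (use elim(1) in simp)
    qed
    have "Measurable.pred (M \<Otimes>\<^sub>M M) (\<lambda>x. cross p (fst x) \<noteq> 0 \<and> cross (fst x) (snd x) \<noteq> 0 \<and> cross p (snd x) \<noteq> 0)"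
      by measurable
    from MM.AE_pair_measure[OF this[unfolded pred_def]] ae show ?case
      by simp
  qed
  moreover have "Measurable.pred (M \<Otimes>\<^sub>M M \<Otimes>\<^sub>M M) (\<lambda>z. cross (fst z) (fst (snd z)) \<noteq> 0 \<and>
     cross (fst (snd z)) (snd (snd z)) \<noteq> 0 \<and> cross (fst z) (snd (snd z)) \<noteq> 0)"
    by measurable
  ultimately show ?thesis
    using MMM.AE_pair_measure unfolding pred_def by simp
qed

lemma sets_triple_eq_borel: "sets (M \<Otimes>\<^sub>M M \<Otimes>\<^sub>M M) = sets borel"
proof -
  have "sets (M \<Otimes>\<^sub>M M) = sets (borel :: ((real \<times> real) \<times> (real \<times> real)) measure)"
    by (subst borel_prod[symmetric]) (intro sets_pair_measure_cong sets_eq_borel)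
  then show ?thesis
    by (subst borel_prod[symmetric]) (intro sets_pair_measure_cong sets_eq_borel)
qed

lemma zero_notin_triangle_sets:
  "{(p, q, s). 0 \<notin> convex hull {p, q, s}} \<in> sets (M \<Otimes>\<^sub>M M \<Otimes>\<^sub>M M)"
proof -
  have "{(p, q, s). (0::real \<times> real) \<notin> convex hull {p, q, s}}
      = {z. \<exists>v. 0 < inner v (fst z) \<and> 0 < inner v (fst (snd z)) \<and> 0 < inner v (snd (snd z))}"
    by (rule Collect_cong) (simp only: split_beta zero_in_convex_hull3_iff not_not)
  also have "\<dots> \<in> sets (M \<Otimes>\<^sub>M M \<Otimes>\<^sub>M M)"
    unfolding sets_triple_eq_borel
    by (intro borel_open open_Collect_ex open_Collect_conj open_Collect_less continuous_intros)
  finally show ?thesis .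
qed

theorem emeasure_zero_notin_triangle:
  "emeasure (M \<Otimes>\<^sub>M M \<Otimes>\<^sub>M M) {(p, q, s). 0 \<notin> convex hull {p, q, s}}
     = 3 * (\<integral>\<^sup>+p. left_measure p ^ 2 \<partial>M)"
proof -
  define E1 where "E1 = {(p, q, s). 0 < cross p q \<and> 0 < cross p s}"
  define E2 where "E2 = {(p, q, s). 0 < cross q p \<and> 0 < cross q s}"
  define E3 where "E3 = {(p, q, s). 0 < cross s p \<and> 0 < cross s q}"
  have E_sets: "E1 \<in> sets (M \<Otimes>\<^sub>M M \<Otimes>\<^sub>M M)" "E2 \<in> sets (M \<Otimes>\<^sub>M M \<Otimes>\<^sub>M M)"
    "E3 \<in> sets (M \<Otimes>\<^sub>M M \<Otimes>\<^sub>M M)"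
    unfolding E1_def E2_def E3_def by (intro Collect_in_sets_tripleI; measurable)+
  have "AE z in M \<Otimes>\<^sub>M M \<Otimes>\<^sub>M M.
      z \<in> {(p, q, s). 0 \<notin> convex hull {p, q, s}} \<longleftrightarrow> z \<in> E1 \<union> E2 \<union> E3"
    using AE_noncollinear
  proof eventually_elim
    case (elim z)
    obtain p q s where z: "z = (p, q, s)" by (cases z)
    from elim show ?case
      using zero_notin_triangle_iff_extreme[of p q s] by (simp add: z E1_def E2_def E3_def)
  qed
  then have "emeasure (M \<Otimes>\<^sub>M M \<Otimes>\<^sub>M M) {(p, q, s). 0 \<notin> convex hull {p, q, s}}
      = emeasure (M \<Otimes>\<^sub>M M \<Otimes>\<^sub>M M) (E1 \<union> E2 \<union> E3)"
    by (rule emeasure_eq_AE) (use zero_notin_triangle_sets E_sets in auto)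
  also have "\<dots> = emeasure (M \<Otimes>\<^sub>M M \<Otimes>\<^sub>M M) E1 + emeasure (M \<Otimes>\<^sub>M M \<Otimes>\<^sub>M M) E2
      + emeasure (M \<Otimes>\<^sub>M M \<Otimes>\<^sub>M M) E3"
  proof -
    have "E1 \<inter> E2 = {}" "(E1 \<union> E2) \<inter> E3 = {}"
      unfolding E1_def E2_def E3_def by (auto dest: cross_pos_asym)
    then show ?thesis
      using E_sets by (simp add: plus_emeasure)
  qed
  also have "\<dots> = 3 * (\<integral>\<^sup>+p. left_measure p ^ 2 \<partial>M)"
    unfolding E1_def E2_def E3_def emeasure_first_extreme emeasure_second_extreme
      emeasure_third_extreme
    by (simp only: numeral_Bit1 numeral_One distrib_right mult_1 add.assoc)
  finally show ?thesis .
qed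

theorem prob_zero_in_triangle:
  "measure (M \<Otimes>\<^sub>M M \<Otimes>\<^sub>M M) {(p, q, s). 0 \<in> convex hull {p, q, s}}
     = 1 - 3 * enn2real (\<integral>\<^sup>+p. left_measure p ^ 2 \<partial>M)"
proof -
  have "{(p, q, s). 0 \<in> convex hull {p, q, s}}
      = space (M \<Otimes>\<^sub>M M \<Otimes>\<^sub>M M) - {(p, q, s). 0 \<notin> convex hull {p, q, s}}"
    by (auto simp: space_pair_measure)
  moreover have "measure (M \<Otimes>\<^sub>M M \<Otimes>\<^sub>M M) {(p, q, s). 0 \<notin> convex hull {p, q, s}}
      = 3 * enn2real (\<integral>\<^sup>+p. left_measure p ^ 2 \<partial>M)"
    by (simp add: measure_def emeasure_zero_notin_triangle enn2real_mult)
  ultimately show ?thesis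
    by (simp add: MMM.prob_compl zero_notin_triangle_sets)
qed

abbreviation angle_distr :: "real measure" where
  "angle_distr \<equiv> distr M borel polar_angle"

lemma left_measure_eq_angle_distr:
  assumes "emeasure M {0} = 0" and "p \<noteq> 0"
  shows "left_measure p = emeasure angle_distr {\<theta>. 0 < sin (\<theta> - polar_angle p)}"
proof -
  have "{q. 0 < cross p q} = {q. 0 < sin (polar_angle q - polar_angle p)} - {0}"
    using \<open>p \<noteq> 0\<close> by (auto simp: cross_eq_sin_polar_angle zero_less_mult_iff mult_less_0_iff)
  then have "left_measure p = emeasure M ({q. 0 < sin (polar_angle q - polar_angle p)} - {0})"
    by (simp only: left_measure_def)
  also have "\<dots> = emeasure M {q. 0 < sin (polar_angle q - polar_angle p)}"
    by (rule emeasure_Diff_null_set) (use assms(1) in \<open>auto simp: null_sets_def\<close>)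
  also have "\<dots> = emeasure angle_distr {\<theta>. 0 < sin (\<theta> - polar_angle p)}"
    by (subst emeasure_distr) (auto simp: vimage_def)
  finally show ?thesis .
qed

lemma nn_integral_left_measure_sq_angle_distr:
  assumes "emeasure M {0} = 0"
  shows "(\<integral>\<^sup>+p. left_measure p ^ 2 \<partial>M)
    = (\<integral>\<^sup>+\<theta>. emeasure angle_distr {\<phi>. 0 < sin (\<phi> - \<theta>)} ^ 2 \<partial>angle_distr)"
proof -
  interpret A: prob_space angle_distr
    by (rule prob_space_distr) simp
  have "AE p in M. p \<noteq> 0"
    using assms by (intro AE_I'[of "{0}"]) (auto simp: null_sets_def)
  then have "(\<integral>\<^sup>+p. left_measure p ^ 2 \<partial>M)
      = (\<integral>\<^sup>+p. emeasure angle_distr {\<phi>. 0 < sin (\<phi> - polar_angle p)} ^ 2 \<partial>M)"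
    by (intro nn_integral_cong_AE) (auto elim!: AE_mp simp: left_measure_eq_angle_distr[OF assms])
  also have "\<dots> = (\<integral>\<^sup>+\<theta>. emeasure angle_distr {\<phi>. 0 < sin (\<phi> - \<theta>)} ^ 2 \<partial>angle_distr)"
  proof -
    have "sets (borel \<Otimes>\<^sub>M angle_distr) = sets (borel :: (real \<times> real) measure)"
      by (subst borel_prod[symmetric]) (intro sets_pair_measure_cong; simp)
    then have "{z. 0 < sin (snd z - fst z)} \<in> sets (borel \<Otimes>\<^sub>M angle_distr)"
      by (simp add: borel_open open_Collect_less continuous_intros)
    then have "(\<lambda>\<theta>. emeasure angle_distr (Pair \<theta> -` {z. 0 < sin (snd z - fst z)})) \<in> borel_measurable borel"
      by (rule A.measurable_emeasure_Pair)
    then have [measurable]: "(\<lambda>\<theta>. emeasure angle_distr {\<phi>. 0 < sin (\<phi> - \<theta>)}) \<in> borel_measurable borel"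
      by (simp add: vimage_def)
    show ?thesis
      by (rule nn_integral_distr[symmetric]) measurable
  qed
  finally show ?thesis .
qed

end

section \<open>Areas of circular sectors\<close>

lemma sector_row_primitive_deriv:
  fixes r c y :: real
  assumes r: "r > 0" and y: "-r < y" "y < r"
  shows "((\<lambda>y. (y * sqrt (r^2 - y^2) + r^2 * arcsin (y / r)) / 2 - y^2 * c / 2)
          has_real_derivative (sqrt (r^2 - y^2) - y * c)) (at y)"
proof -
  define s where "s = sqrt (r^2 - y^2)"
  have pos: "r^2 - y^2 > 0"
    using abs_le_square_iff[of r y] r y by auto
  then have s_pos: "s > 0" by (simp add: s_def)
  have s_square: "s^2 = r^2 - y^2" using pos by (simp add: s_def)
  have yr: "-1 < y/r" "y/r < 1" using y r by (simp_all add: field_simps)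
  have sqrt_eq: "sqrt (1 - (y/r)^2) = s / r"
  proof -
    have "1 - (y/r)^2 = (s/r)^2" using s_square r by (simp add: field_simps power_divide)
    then show ?thesis using s_pos r by simp
  qed
  have sqrt_deriv: "((\<lambda>y. sqrt (r^2 - y^2)) has_real_derivative (inverse s / 2) * (- (2 * y))) (at y)"
    unfolding s_def
    by (rule DERIV_chain2[where f=sqrt and g="\<lambda>y. r^2 - y^2", OF DERIV_real_sqrt[OF pos]])
       (auto intro!: derivative_eq_intros)
  have arcsin_deriv: "((\<lambda>y. arcsin (y / r)) has_real_derivative inverse (s / r) * (1 / r)) (at y)"
    unfolding sqrt_eq[symmetric]
    by (rule DERIV_chain2[where f=arcsin and g="\<lambda>y. y / r", OF DERIV_arcsin[OF yr]])
       (use r in \<open>auto intro!: derivative_eq_intros\<close>)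
  have product_deriv: "((\<lambda>y. y * sqrt (r^2 - y^2)) has_real_derivative sqrt (r^2 - y^2) + y * ((inverse s / 2) * (- (2 * y)))) (at y)"
    using DERIV_mult'[OF DERIV_ident sqrt_deriv] by simp
  have scaled_arcsin_deriv: "((\<lambda>y. r^2 * arcsin (y / r)) has_real_derivative r^2 * (inverse (s / r) * (1 / r))) (at y)"
    by (rule DERIV_cmult[OF arcsin_deriv])
  have sum_deriv: "((\<lambda>y. (y * sqrt (r^2 - y^2) + r^2 * arcsin (y / r)) / 2) has_real_derivative
      (sqrt (r^2 - y^2) + y * ((inverse s / 2) * (- (2 * y))) + r^2 * (inverse (s / r) * (1 / r))) / 2) (at y)"
    by (rule DERIV_cdivide[OF DERIV_add[OF product_deriv scaled_arcsin_deriv]])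
  have square_deriv: "((\<lambda>y. y^2 * c / 2) has_real_derivative (2 * y * c / 2)) (at y)"
    by (auto intro!: derivative_eq_intros)
  note DERIV_diff[OF sum_deriv square_deriv]
  moreover have "(sqrt (r^2 - y^2) + y * ((inverse s / 2) * (- (2 * y))) + r^2 * (inverse (s / r) * (1 / r))) / 2 - (2 * y * c / 2)
      = sqrt (r^2 - y^2) - y * c"
    using s_pos r s_square unfolding s_def[symmetric] by (simp add: field_simps power2_eq_square)
  ultimately show ?thesis by (simp only:)
qed

lemma has_integral_sector_row_length:
  fixes r \<beta> :: real
  assumes r: "r > 0" and b: "0 < \<beta>" "\<beta> \<le> pi/2"
  shows "((\<lambda>y. sqrt (r^2 - y^2) - y * (cos \<beta> / sin \<beta>)) has_integral r^2 * \<beta> / 2) {0..r * sin \<beta>}"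
proof -
  define c where "c = cos \<beta> / sin \<beta>"
  define G where "G = (\<lambda>y. (y * sqrt (r^2 - y^2) + r^2 * arcsin (y / r)) / 2 - y^2 * c / 2)"
  have sb: "0 < sin \<beta>" "sin \<beta> \<le> 1" using b by (auto intro: sin_gt_zero)
  have cb: "0 \<le> cos \<beta>" using b by (intro cos_ge_zero) auto
  have bnd: "0 \<le> r * sin \<beta>" "r * sin \<beta> \<le> r" using sb r by auto
  have "((\<lambda>y. sqrt (r^2 - y^2) - y * c) has_integral (G (r * sin \<beta>) - G 0)) {0..r * sin \<beta>}"
  proof (rule fundamental_theorem_of_calculus_interior)
    show "0 \<le> r * sin \<beta>" by (fact bnd)
    show "continuous_on {0..r * sin \<beta>} G" unfolding G_def using r bnd
      by (intro continuous_intros) (auto simp: field_simps intro: order_trans[OF _ bnd(2)])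
    fix y assume "y \<in> {0<..<r * sin \<beta>}"
    then have y: "-r < y" "y < r" using bnd by auto
    show "(G has_vector_derivative sqrt (r^2 - y^2) - y * c) (at y)"
      unfolding G_def has_real_derivative_iff_has_vector_derivative[symmetric]
      by (rule sector_row_primitive_deriv[OF r y])
  qed
  moreover have "G (r * sin \<beta>) - G 0 = r^2 * \<beta> / 2"
  proof -
    have "r^2 - (r * sin \<beta>)^2 = (r * cos \<beta>)^2"
      by (simp add: power_mult_distrib cos_squared_eq algebra_simps)
    then have sq: "sqrt (r^2 - (r * sin \<beta>)^2) = r * cos \<beta>" using r cb by simp
    have as: "arcsin (r * sin \<beta> / r) = \<beta>" using r b by (simp add: arcsin_sin)
    show ?thesis unfolding G_def sq as c_def using sb r
      by (simp add: field_simps power2_eq_square)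
  qed
  ultimately show ?thesis by (simp add: c_def)
qed

definition sector :: "real \<Rightarrow> real \<Rightarrow> (real \<times> real) set" where
  "sector r \<theta> = {p. p \<noteq> 0 \<and> norm p \<le> r \<and> polar_angle p < \<theta>}"

lemma sets_sector [measurable]: "sector r \<theta> \<in> sets borel"
  unfolding sector_def by measurable

lemma polar_angle_below_quadrant_iff:
  assumes t: "0 \<le> t" "t < 2*pi" and \<beta>: "0 < \<beta>" "\<beta> \<le> pi/2"
  shows "t < \<beta> \<longleftrightarrow> 0 \<le> sin t \<and> sin (t - \<beta>) < 0"
proof
  assume "t < \<beta>"
  moreover have "sin (t - \<beta>) = - sin (\<beta> - t)"
    by (metis minus_diff_eq sin_minus)
  ultimately show "0 \<le> sin t \<and> sin (t - \<beta>) < 0"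
    using t \<beta> by (auto intro!: sin_ge_zero sin_gt_zero)
next
  assume sin: "0 \<le> sin t \<and> sin (t - \<beta>) < 0"
  then have "t \<le> pi"
    using sin_lt_zero[of t] t by force
  then show "t < \<beta>"
    using sin sin_ge_zero[of "t - \<beta>"] \<beta> by force
qed

lemma sector_quadrant_iff:
  assumes \<beta>: "0 < \<beta>" "\<beta> \<le> pi/2"
  shows "p \<in> sector r \<beta> \<longleftrightarrow> 0 \<le> snd p \<and> snd p * cos \<beta> < fst p * sin \<beta> \<and> norm p \<le> r"
proof -
  define \<rho> t where "\<rho> = norm p" and "t = polar_angle p"
  have "snd p = \<rho> * sin t"
    by (simp add: \<rho>_def t_def snd_eq_polar)
  moreover have "snd p * cos \<beta> < fst p * sin \<beta> \<longleftrightarrow> \<rho> * sin (t - \<beta>) < 0"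
    by (simp add: \<rho>_def t_def fst_eq_polar[of p] snd_eq_polar[of p] sin_diff algebra_simps)
  moreover have "t < \<beta> \<longleftrightarrow> 0 \<le> sin t \<and> sin (t - \<beta>) < 0"
    using polar_angle_nonneg polar_angle_less \<beta> unfolding t_def by (rule polar_angle_below_quadrant_iff)
  ultimately show ?thesis
    by (cases "p = 0") (auto simp: sector_def \<rho>_def t_def zero_le_mult_iff mult_less_0_iff)
qed

lemma emeasure_lborel_rows:
  assumes "A \<in> sets (borel :: (real \<times> real) measure)"
  shows "emeasure lborel A = (\<integral>\<^sup>+y. emeasure lborel {x. (x, y) \<in> A} \<partial>lborel)"
proof -
  have "emeasure (lborel :: (real \<times> real) measure) A = emeasure (lborel \<Otimes>\<^sub>M lborel) A"
    by (simp add: lborel_prod)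
  also have "\<dots> = (\<integral>\<^sup>+y. emeasure lborel ((\<lambda>x. (x, y)) -` A) \<partial>lborel)"
    by (intro lborel_pair.emeasure_pair_measure_alt2) (subst lborel_prod, simp add: assms)
  finally show ?thesis by (simp add: vimage_def)
qed

lemma emeasure_lborel_columns:
  assumes "A \<in> sets (borel :: (real \<times> real) measure)"
  shows "emeasure lborel A = (\<integral>\<^sup>+x. emeasure lborel {y. (x, y) \<in> A} \<partial>lborel)"
proof -
  have "emeasure (lborel :: (real \<times> real) measure) A = emeasure (lborel \<Otimes>\<^sub>M lborel) A"
    by (simp add: lborel_prod)
  also have "\<dots> = (\<integral>\<^sup>+x. emeasure lborel (Pair x -` A) \<partial>lborel)"
    by (intro lborel.emeasure_pair_measure_alt) (subst lborel_prod, simp add: assms)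
  finally show ?thesis by (simp add: vimage_def)
qed

lemma cot_mult_le_sqrt_iff:
  assumes r: "0 < r" and \<beta>: "0 < \<beta>" "\<beta> \<le> pi/2" and y: "0 \<le> y"
  shows "y * (cos \<beta> / sin \<beta>) \<le> sqrt (r^2 - y^2) \<longleftrightarrow> y \<le> r * sin \<beta>"
proof -
  have sin: "0 < sin \<beta>" and cos: "0 \<le> cos \<beta>"
    using \<beta> by (auto intro: sin_gt_zero cos_ge_zero)
  then have "0 \<le> y * (cos \<beta> / sin \<beta>)"
    using y by simp
  then have "y * (cos \<beta> / sin \<beta>) \<le> sqrt (r^2 - y^2) \<longleftrightarrow> (y * (cos \<beta> / sin \<beta>))^2 \<le> r^2 - y^2"
    using real_le_rsqrt sqrt_ge_absD by (metis abs_of_nonneg)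
  also have "\<dots> \<longleftrightarrow> y^2 * (cos \<beta>)^2 \<le> (r^2 - y^2) * (sin \<beta>)^2"
    using sin by (simp add: power_mult_distrib power_divide field_simps)
  also have "\<dots> \<longleftrightarrow> y^2 \<le> (r * sin \<beta>)^2"
    by (simp add: cos_squared_eq power_mult_distrib algebra_simps)
  also have "\<dots> \<longleftrightarrow> y \<le> r * sin \<beta>"
    using y r sin by (simp add: power2_le_iff_abs_le)
  finally show ?thesis .
qed

lemma sector_quadrant_row:
  assumes r: "0 < r" and \<beta>: "0 < \<beta>" "\<beta> \<le> pi/2"
  shows "{x. (x, y) \<in> sector r \<beta>}
    = (if 0 \<le> y \<and> y \<le> r * sin \<beta> then {y * (cos \<beta> / sin \<beta>) <.. sqrt (r^2 - y^2)} else {})"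
proof -
  have sin: "0 < sin \<beta>" and cos: "0 \<le> cos \<beta>"
    using \<beta> by (auto intro: sin_gt_zero cos_ge_zero)
  have row: "(x, y) \<in> sector r \<beta> \<longleftrightarrow> 0 \<le> y \<and> y * (cos \<beta> / sin \<beta>) < x \<and> x \<le> sqrt (r^2 - y^2)"
    for x
  proof -
    have "y * cos \<beta> < x * sin \<beta> \<longleftrightarrow> y * (cos \<beta> / sin \<beta>) < x"
      using sin by (simp add: field_simps)
    moreover have "norm (x, y) \<le> r \<longleftrightarrow> x \<le> sqrt (r^2 - y^2)"
      if "0 \<le> y" "y * (cos \<beta> / sin \<beta>) < x"
    proof -
      have "0 \<le> x"
        using that sin cos by (smt (verit) divide_nonneg_pos mult_nonneg_nonneg)
      then have "x \<le> sqrt (r^2 - y^2) \<longleftrightarrow> x^2 + y^2 \<le> r^2"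
        using real_le_rsqrt sqrt_ge_absD by (metis abs_of_nonneg le_diff_eq)
      also have "\<dots> \<longleftrightarrow> norm (x, y) \<le> r"
        using r by (auto simp: norm_Pair intro: real_le_lsqrt dest: sqrt_le_D)
      finally show ?thesis ..
    qed
    ultimately show ?thesis
      unfolding sector_quadrant_iff[OF \<beta>] by auto
  qed
  show ?thesis
  proof (cases "0 \<le> y \<and> y \<le> r * sin \<beta>")
    case False
    then have "\<not> y * (cos \<beta> / sin \<beta>) < sqrt (r^2 - y^2)" if "0 \<le> y"
      using cot_mult_le_sqrt_iff[OF r \<beta> that] that by auto
    then show ?thesis
      using False by (auto simp: row)
  qed (auto simp: row)
qed

lemma emeasure_sector_quadrant:
  assumes r: "0 < r" and \<beta>: "0 < \<beta>" "\<beta> \<le> pi/2"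
  shows "emeasure lborel (sector r \<beta>) = ennreal (r^2 * \<beta> / 2)"
proof -
  have "emeasure lborel (sector r \<beta>) = (\<integral>\<^sup>+y. emeasure lborel {x. (x, y) \<in> sector r \<beta>} \<partial>lborel)"
    by (rule emeasure_lborel_rows) simp
  also have "\<dots> = (\<integral>\<^sup>+y. ennreal (sqrt (r^2 - y^2) - y * (cos \<beta> / sin \<beta>))
      * indicator {0..r * sin \<beta>} y \<partial>lborel)"
    using cot_mult_le_sqrt_iff[OF r \<beta>]
    by (intro nn_integral_cong) (auto simp: sector_quadrant_row[OF r \<beta>])
  also have "\<dots> = ennreal (r^2 * \<beta> / 2)"
    using cot_mult_le_sqrt_iff[OF r \<beta>] has_integral_sector_row_length[OF r \<beta>]
    by (intro nn_integral_has_integral_lebesgue') auto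
  finally show ?thesis .
qed

definition rotate_cw :: "real \<times> real \<Rightarrow> real \<times> real" where
  "rotate_cw p = (snd p, - fst p)"

lemma borel_measurable_rotate_cw [measurable]: "rotate_cw \<in> borel_measurable borel"
  unfolding rotate_cw_def by (intro borel_measurable_continuous_onI continuous_intros)

lemma row_in_sets_borel: "A \<in> sets (borel :: (real \<times> real) measure) \<Longrightarrow> {z. (y, z) \<in> A} \<in> sets borel"
  using sets_Pair1[of A borel borel y] by (simp add: borel_prod vimage_def)

lemma emeasure_lborel_uminus_vimage: "B \<in> sets borel \<Longrightarrow> emeasure lborel {x::real. - x \<in> B} = emeasure lborel B"
proof -
  assume B: "B \<in> sets borel"
  have "emeasure lborel B = emeasure (distr lborel borel uminus) B" by (simp add: lborel_distr_uminus)
  also have "\<dots> = emeasure lborel (uminus -` B \<inter> space lborel)" using B by (intro emeasure_distr) auto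
  finally show ?thesis by (simp add: vimage_def)
qed

lemma emeasure_lborel_rotate_cw_vimage:
  assumes A: "A \<in> sets (borel :: (real \<times> real) measure)"
  shows "emeasure lborel {p. rotate_cw p \<in> A} = emeasure lborel A"
proof -
  have Am: "{p. rotate_cw p \<in> A} \<in> sets borel"
    using measurable_sets[OF borel_measurable_rotate_cw A] by (simp add: vimage_def)
  have "emeasure lborel {p. rotate_cw p \<in> A} = (\<integral>\<^sup>+y. emeasure lborel {x. (x, y) \<in> {p. rotate_cw p \<in> A}} \<partial>lborel)"
    by (rule emeasure_lborel_rows[OF Am])
  also have "\<dots> = (\<integral>\<^sup>+y. emeasure lborel {z. (y, z) \<in> A} \<partial>lborel)"
  proof (intro nn_integral_cong)
    fix y :: real
    have "{x. (x, y) \<in> {p. rotate_cw p \<in> A}} = {x. - x \<in> {z. (y, z) \<in> A}}" by (simp add: rotate_cw_def)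
    then show "emeasure lborel {x. (x, y) \<in> {p. rotate_cw p \<in> A}} = emeasure lborel {z. (y, z) \<in> A}"
      using emeasure_lborel_uminus_vimage[OF row_in_sets_borel[OF A, of y]] by simp
  qed
  also have "\<dots> = emeasure lborel A" by (rule emeasure_lborel_columns[OF A, symmetric])
  finally show ?thesis .
qed

lemma rotate_cw_polar: "rotate_cw (polar \<rho> t) = polar \<rho> (t - pi/2)"
  by (simp add: rotate_cw_def polar_def cos_diff sin_diff)

lemma rotate_cw_eq_0_iff: "rotate_cw p = 0 \<longleftrightarrow> p = 0"
  by (cases p) (auto simp: rotate_cw_def zero_prod_def)

lemma norm_rotate_cw: "norm (rotate_cw p) = norm p"
  by (cases p) (simp add: rotate_cw_def norm_Pair add.commute)

lemma rotate_cw_vimage_sector: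
  assumes "0 \<le> \<theta>" "\<theta> \<le> 3*pi/2"
  shows "{p. rotate_cw p \<in> sector r \<theta>} = {p. p \<noteq> 0 \<and> norm p \<le> r \<and> pi/2 \<le> polar_angle p \<and> polar_angle p < \<theta> + pi/2}"
proof (intro set_eqI)
  fix p :: "real \<times> real"
  show "p \<in> {p. rotate_cw p \<in> sector r \<theta>} \<longleftrightarrow> p \<in> {p. p \<noteq> 0 \<and> norm p \<le> r \<and> pi/2 \<le> polar_angle p \<and> polar_angle p < \<theta> + pi/2}"
  proof (cases "p = 0")
    case True
    then show ?thesis by (simp add: sector_def rotate_cw_eq_0_iff)
  next
    case False
    define \<rho> t where "\<rho> = norm p" and "t = polar_angle p"
    have rho: "\<rho> > 0" using False by (simp add: \<rho>_def)
    have t: "0 \<le> t" "t < 2*pi" using polar_angle_nonneg[of p] polar_angle_less[of p] by (auto simp: t_def)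
    have p: "p = polar \<rho> t" by (simp add: \<rho>_def t_def polar_norm_polar_angle)
    have "polar_angle (rotate_cw p) = (if pi/2 \<le> t then t - pi/2 else t + 3*pi/2)"
    proof (cases "pi/2 \<le> t")
      case True
      then show ?thesis using t rho by (simp add: p rotate_cw_polar polar_angle_polar)
    next
      case False
      have "rotate_cw p = polar \<rho> ((t + 3*pi/2) - 2*pi)" by (simp add: p rotate_cw_polar algebra_simps)
      also have "\<dots> = polar \<rho> (t + 3*pi/2)" by (rule polar_diff_2pi)
      finally show ?thesis using False t rho by (simp add: polar_angle_polar)
    qed
    moreover have "0 \<le> polar_angle p" by (rule polar_angle_nonneg polar_angle_less)
    ultimately show ?thesis using False assms by (auto simp: sector_def rotate_cw_eq_0_iff norm_rotate_cw \<rho>_def t_def)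
  qed
qed

lemma emeasure_sector_add_quarter:
  assumes r: "r > 0" and th: "0 \<le> \<theta>" "\<theta> \<le> 3*pi/2"
    and F: "emeasure lborel (sector r \<theta>) = ennreal (r^2 * \<theta> / 2)"
  shows "emeasure lborel (sector r (\<theta> + pi/2)) = ennreal (r^2 * (\<theta> + pi/2) / 2)"
proof -
  have eq: "sector r (\<theta> + pi/2) = sector r (pi/2) \<union> {p. rotate_cw p \<in> sector r \<theta>}"
    unfolding rotate_cw_vimage_sector[OF th] using th by (auto simp: sector_def)
  have dj: "sector r (pi/2) \<inter> {p. rotate_cw p \<in> sector r \<theta>} = {}"
    unfolding rotate_cw_vimage_sector[OF th] by (auto simp: sector_def)
  have m2: "{p. rotate_cw p \<in> sector r \<theta>} \<in> sets borel"
    using measurable_sets[OF borel_measurable_rotate_cw sets_sector] by (simp add: vimage_def)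
  have "emeasure lborel (sector r (\<theta> + pi/2)) = emeasure lborel (sector r (pi/2)) + emeasure lborel {p. rotate_cw p \<in> sector r \<theta>}"
    unfolding eq using dj m2 by (intro plus_emeasure[symmetric]) auto
  also have "\<dots> = ennreal (r^2 * (pi/2) / 2) + ennreal (r^2 * \<theta> / 2)"
    using emeasure_sector_quadrant[OF r, of "pi/2"] emeasure_lborel_rotate_cw_vimage[OF sets_sector] F by simp
  also have "\<dots> = ennreal (r^2 * (pi/2) / 2 + r^2 * \<theta> / 2)"
    using th by (intro ennreal_plus[symmetric]) auto
  also have "r^2 * (pi/2) / 2 + r^2 * \<theta> / 2 = r^2 * (\<theta> + pi/2) / 2"
    by (simp add: field_simps)
  finally show ?thesis .
qed

lemma emeasure_sector:
  assumes r: "r > 0" and th: "0 \<le> \<theta>" "\<theta> \<le> 2*pi"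
  shows "emeasure lborel (sector r \<theta>) = ennreal (r^2 * \<theta> / 2)"
proof -
  have base: "emeasure lborel (sector r t) = ennreal (r^2 * t / 2)" if "0 \<le> t" "t \<le> pi/2" for t
  proof (cases "t = 0")
    case True
    have "sector r 0 = {}" using polar_angle_nonneg polar_angle_less by (auto simp: sector_def not_less)
    then show ?thesis using True by simp
  next
    case False
    then show ?thesis using that by (intro emeasure_sector_quadrant[OF r]) auto
  qed
  consider "\<theta> \<le> pi/2" | "pi/2 < \<theta>" "\<theta> \<le> pi" | "pi < \<theta>" "\<theta> \<le> 3*pi/2" | "3*pi/2 < \<theta>" by linarith
  then show ?thesis
  proof cases
    case 1
    then show ?thesis using base th by auto
  next
    case 2
    have "emeasure lborel (sector r ((\<theta> - pi/2) + pi/2)) = ennreal (r^2 * ((\<theta> - pi/2) + pi/2) / 2)"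
      using 2 by (intro emeasure_sector_add_quarter[OF r] base) auto
    then show ?thesis by simp
  next
    case 3
    have "emeasure lborel (sector r ((\<theta> - pi) + pi/2)) = ennreal (r^2 * ((\<theta> - pi) + pi/2) / 2)"
      using 3 by (intro emeasure_sector_add_quarter[OF r] base) auto
    then have "emeasure lborel (sector r ((\<theta> - pi/2) + pi/2)) = ennreal (r^2 * ((\<theta> - pi/2) + pi/2) / 2)"
      using 3 by (intro emeasure_sector_add_quarter[OF r]) (auto simp: algebra_simps)
    then show ?thesis by simp
  next
    case 4
    have "emeasure lborel (sector r ((\<theta> - 3*pi/2) + pi/2)) = ennreal (r^2 * ((\<theta> - 3*pi/2) + pi/2) / 2)"
      using 4 th by (intro emeasure_sector_add_quarter[OF r] base) auto
    then have "emeasure lborel (sector r ((\<theta> - pi) + pi/2)) = ennreal (r^2 * ((\<theta> - pi) + pi/2) / 2)"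
      using 4 th by (intro emeasure_sector_add_quarter[OF r]) (auto simp: algebra_simps)
    then have "emeasure lborel (sector r ((\<theta> - pi/2) + pi/2)) = ennreal (r^2 * ((\<theta> - pi/2) + pi/2) / 2)"
      using 4 th by (intro emeasure_sector_add_quarter[OF r]) (auto simp: algebra_simps)
    then show ?thesis by simp
  qed
qed

lemma line_null_sets:
  assumes "u \<noteq> 0"
  shows "{p. cross u p = 0} \<in> null_sets lborel"
proof -
  have "{p. cross u p = 0} = {p. (- snd u, fst u) \<bullet> p = 0}"
    by (auto simp: cross_def inner_prod_def algebra_simps)
  moreover have "(- snd u, fst u) \<noteq> 0"
    using assms by (cases u) (auto simp: zero_prod_def)
  ultimately have "negligible {p. cross u p = 0}"
    using negligible_hyperplane[of "(- snd u, fst u)" 0] by simp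
  then show ?thesis
    by (simp add: negligible_iff_null_sets null_sets_completion_iff)
qed

lemma ray_null_sets: "{p. polar_angle p = \<theta>} \<in> null_sets lborel"
proof (rule null_sets_subset)
  have "polar 1 \<theta> \<noteq> 0"
    using norm_polar[of 1 \<theta>] by auto
  then show "{p. cross (polar 1 \<theta>) p = 0} \<in> null_sets lborel"
    by (rule line_null_sets)
  show "{p. polar_angle p = \<theta>} \<subseteq> {p. cross (polar 1 \<theta>) p = 0}"
  proof
    fix p assume "p \<in> {p. polar_angle p = \<theta>}"
    then have "cross (polar 1 \<theta>) p = cross (polar 1 \<theta>) (polar (norm p) \<theta>)"
      using polar_norm_polar_angle[of p] by simp
    then show "p \<in> {p. cross (polar 1 \<theta>) p = 0}"
      by (simp add: cross_polar)
  qed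
qed simp

definition angular_sector :: "real \<Rightarrow> real \<Rightarrow> real \<Rightarrow> (real \<times> real) set" where
  "angular_sector r a b = {p. p \<noteq> 0 \<and> norm p \<le> r \<and> a \<le> polar_angle p \<and> polar_angle p \<le> b}"

lemma sets_angular_sector [measurable]: "angular_sector r a b \<in> sets borel"
  unfolding angular_sector_def by measurable

lemma emeasure_angular_sector:
  assumes r: "r > 0" and ab: "0 \<le> a" "a \<le> b" "b \<le> 2*pi"
  shows "emeasure lborel (angular_sector r a b) = ennreal (r^2 * (b - a) / 2)"
proof -
  have eq: "angular_sector r a b = (sector r b - sector r a) \<union> (angular_sector r a b \<inter> {p. polar_angle p = b})"
    by (auto simp: angular_sector_def sector_def)
  have n: "angular_sector r a b \<inter> {p. polar_angle p = b} \<in> null_sets lborel"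
    by (rule null_sets_subset[OF ray_null_sets[of b]]) auto
  have "emeasure lborel (angular_sector r a b) = emeasure lborel (sector r b - sector r a)"
    by (subst eq, rule emeasure_Un_null_set[OF _ n]) simp
  also have "\<dots> = emeasure lborel (sector r b) - emeasure lborel (sector r a)"
  proof (rule emeasure_Diff)
    show "emeasure lborel (sector r a) \<noteq> \<infinity>" using emeasure_sector[OF r, of a] ab by simp
    show "sector r a \<subseteq> sector r b" using ab by (auto simp: sector_def)
  qed auto
  also have "\<dots> = ennreal (r^2 * b / 2) - ennreal (r^2 * a / 2)"
    using ab by (simp add: emeasure_sector[OF r])
  also have "\<dots> = ennreal (r^2 * b / 2 - r^2 * a / 2)"
    using ab by (intro ennreal_minus) auto
  also have "r^2 * b / 2 - r^2 * a / 2 = r^2 * (b - a) / 2" by (simp add: field_simps)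
  finally show ?thesis .
qed

lemma cut_disk_subset_angular_sector:
  assumes "0 \<le> \<alpha>"
  shows "cut_disk r \<alpha> \<subseteq> insert 0 (angular_sector r \<alpha> (2*pi - \<alpha>))"
proof
  fix p assume "p \<in> cut_disk r \<alpha>"
  then obtain t \<theta> where p: "p = polar t \<theta>" and \<theta>: "\<alpha> \<le> \<bar>\<theta>\<bar>" "\<bar>\<theta>\<bar> \<le> pi"
    and t: "0 \<le> t" "t \<le> r"
    by (auto simp: cut_disk_def polar_def)
  show "p \<in> insert 0 (angular_sector r \<alpha> (2*pi - \<alpha>))"
  proof (cases "t = 0")
    case True
    then show ?thesis by (simp add: p polar_def zero_prod_def)
  next
    case False
    then have "0 < t" and norm_p: "norm p = t"
      using t by (simp_all add: p norm_polar)
    then have "p \<noteq> 0"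
      by auto
    moreover have "polar_angle p = (if 0 \<le> \<theta> then \<theta> else \<theta> + 2*pi)"
    proof (cases "0 \<le> \<theta>")
      case True
      moreover have "\<theta> < 2*pi"
        using \<theta> pi_gt_zero by linarith
      ultimately show ?thesis
        using \<open>0 < t\<close> by (simp add: p polar_angle_polar)
    next
      case False
      have "p = polar t (\<theta> + 2*pi)"
        by (simp add: p polar_add_2pi)
      then show ?thesis
        using False \<theta> \<open>0 < t\<close> by (simp add: polar_angle_polar)
    qed
    ultimately show ?thesis
      using \<theta> t norm_p assms by (auto simp: angular_sector_def)
  qed
qed

lemma angular_sector_subset_cut_disk:
  assumes "0 \<le> r" "\<alpha> \<le> pi"
  shows "insert 0 (angular_sector r \<alpha> (2*pi - \<alpha>)) \<subseteq> cut_disk r \<alpha>"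
proof
  fix p assume p: "p \<in> insert 0 (angular_sector r \<alpha> (2*pi - \<alpha>))"
  define \<theta> where "\<theta> = (if polar_angle p \<le> pi then polar_angle p else polar_angle p - 2*pi)"
  show "p \<in> cut_disk r \<alpha>"
  proof (cases "p = 0")
    case True
    then show ?thesis
      using assms unfolding cut_disk_def
      by (intro CollectI exI[of _ 0] exI[of _ pi]) (auto simp: zero_prod_def)
  next
    case False
    have "p = polar (norm p) \<theta>"
      by (simp add: \<theta>_def polar_diff_2pi polar_norm_polar_angle)
    moreover have "\<alpha> \<le> \<bar>\<theta>\<bar>" "\<bar>\<theta>\<bar> \<le> pi" "norm p \<le> r"
      using p False polar_angle_nonneg[of p] polar_angle_less[of p]
      by (auto simp: \<theta>_def angular_sector_def)
    ultimately show ?thesis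
      unfolding cut_disk_def polar_def by (intro CollectI exI[of _ "norm p"] exI[of _ \<theta>]) auto
  qed
qed

lemma cut_disk_eq_angular_sector:
  "0 \<le> r \<Longrightarrow> 0 \<le> \<alpha> \<Longrightarrow> \<alpha> \<le> pi \<Longrightarrow> cut_disk r \<alpha> = insert 0 (angular_sector r \<alpha> (2*pi - \<alpha>))"
  using cut_disk_subset_angular_sector angular_sector_subset_cut_disk by (metis subset_antisym)

lemma sets_cut_disk [measurable]:
  "0 \<le> r \<Longrightarrow> 0 \<le> \<alpha> \<Longrightarrow> \<alpha> \<le> pi \<Longrightarrow> cut_disk r \<alpha> \<in> sets borel"
  by (simp add: cut_disk_eq_angular_sector)

lemma emeasure_cut_disk_angle_greater:
  assumes r: "0 < r" and \<alpha>: "0 \<le> \<alpha>" "\<alpha> \<le> pi"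
  shows "emeasure lborel (cut_disk r \<alpha> \<inter> {p. x < polar_angle p})
    = emeasure lborel ({\<alpha>..2*pi-\<alpha>} \<inter> {x<..}) * ennreal (r^2 / 2)"
proof -
  have "emeasure lborel (cut_disk r \<alpha> \<inter> {p. x < polar_angle p})
      = emeasure lborel (cut_disk r \<alpha> \<inter> {p. x < polar_angle p} - {0})"
    using r \<alpha> by (intro emeasure_Diff_null_set[symmetric]) auto
  also have "\<dots> = emeasure lborel ({\<alpha>..2*pi-\<alpha>} \<inter> {x<..}) * ennreal (r^2 / 2)"
  proof -
    have len: "ennreal (r^2 * (b - a) / 2) = emeasure lborel {a..b} * ennreal (r^2 / 2)"
      if "a \<le> b" for a b
      using that by (simp add: ennreal_mult'[symmetric] mult.commute)
    consider "x < \<alpha>" | "\<alpha> \<le> x" "x \<le> 2*pi-\<alpha>" | "2*pi - \<alpha> < x" by linarith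
    then show ?thesis
    proof cases
      case 1
      then have "cut_disk r \<alpha> \<inter> {p. x < polar_angle p} - {0} = angular_sector r \<alpha> (2*pi - \<alpha>)"
        and "{\<alpha>..2*pi-\<alpha>} \<inter> {x<..} = {\<alpha>..2*pi-\<alpha>}"
        using r \<alpha> by (auto simp: cut_disk_eq_angular_sector angular_sector_def)
      then show ?thesis
        using 1 \<alpha> by (simp add: emeasure_angular_sector[OF r] len)
    next
      case 2
      then have "cut_disk r \<alpha> \<inter> {p. x < polar_angle p} - {0}
          = angular_sector r x (2*pi - \<alpha>) - {p. polar_angle p = x}"
        using r \<alpha> by (auto simp: cut_disk_eq_angular_sector angular_sector_def)
      then have "emeasure lborel (cut_disk r \<alpha> \<inter> {p. x < polar_angle p} - {0})
          = emeasure lborel (angular_sector r x (2*pi - \<alpha>))"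
        by (simp only:) (rule emeasure_Diff_null_set[OF ray_null_sets], simp)
      moreover have "{\<alpha>..2*pi-\<alpha>} \<inter> {x<..} = {x<..2*pi-\<alpha>}"
        using 2 by auto
      ultimately show ?thesis
        using 2 \<alpha> by (simp add: emeasure_angular_sector[OF r] len)
    next
      case 3
      then have "cut_disk r \<alpha> \<inter> {p. x < polar_angle p} - {0} = {}"
        and "{\<alpha>..2*pi-\<alpha>} \<inter> {x<..} = {}"
        using r \<alpha> by (auto simp: cut_disk_eq_angular_sector angular_sector_def)
      then show ?thesis by (simp add: Diff_eq_empty_iff[THEN iffD2])
    qed
  qed
  finally show ?thesis .
qed

lemma emeasure_cut_disk:
  assumes "0 < r" "0 \<le> \<alpha>" "\<alpha> \<le> pi"
  shows "emeasure lborel (cut_disk r \<alpha>) = emeasure lborel {\<alpha>..2*pi-\<alpha>} * ennreal (r^2 / 2)"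
proof -
  have "cut_disk r \<alpha> \<inter> {p. -1 < polar_angle p} = cut_disk r \<alpha>"
    using polar_angle_nonneg by (auto intro: less_le_trans[of "-1" 0])
  moreover have "{\<alpha>..2*pi-\<alpha>} \<inter> {-1<..} = {\<alpha>..2*pi-\<alpha>}"
    using assms by auto
  ultimately show ?thesis
    using emeasure_cut_disk_angle_greater[OF assms, of "-1"] by simp
qed

lemma distr_uniform_cut_disk_polar_angle:
  assumes r: "0 < r" and \<alpha>: "0 \<le> \<alpha>" "\<alpha> < pi"
  shows "distr (uniform_measure lborel (cut_disk r \<alpha>)) borel polar_angle
    = uniform_measure lborel {\<alpha>..2*pi-\<alpha>}"
proof (rule measure_eqI_lessThan)
  let ?U = "uniform_measure lborel (cut_disk r \<alpha>)"
  fix x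
  have "emeasure (distr ?U borel polar_angle) {x<..} = emeasure ?U {p. x < polar_angle p}"
    by (subst emeasure_distr) (auto simp: vimage_def)
  also have "\<dots> = emeasure lborel ({\<alpha>..2*pi-\<alpha>} \<inter> {x<..}) * ennreal (r^2 / 2)
      / (emeasure lborel {\<alpha>..2*pi-\<alpha>} * ennreal (r^2 / 2))"
    using r \<alpha> by (simp add: emeasure_cut_disk emeasure_cut_disk_angle_greater Int_commute)
  also have "\<dots> = emeasure (uniform_measure lborel {\<alpha>..2*pi-\<alpha>}) {x<..}"
    using r by (simp add: divide_mult_eq Int_commute)
  finally show "emeasure (distr ?U borel polar_angle) {x<..}
      = emeasure (uniform_measure lborel {\<alpha>..2*pi-\<alpha>}) {x<..}" .
  have "prob_space ?U"
    using r \<alpha> by (intro prob_space_uniform_measure) (auto simp: emeasure_cut_disk ennreal_mult_eq_top_iff)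
  then have "prob_space (distr ?U borel polar_angle)"
    by (rule prob_space.prob_space_distr) simp
  then interpret A: prob_space "distr ?U borel polar_angle" .
  show "emeasure (distr ?U borel polar_angle) {x<..} < \<infinity>"
    by (simp add: less_top[symmetric])
qed simp_all

lemma planar_prob_space_uniform_cut_disk:
  assumes r: "0 < r" and \<alpha>: "0 \<le> \<alpha>" "\<alpha> < pi"
  shows "planar_prob_space (uniform_measure lborel (cut_disk r \<alpha>))"
proof -
  let ?U = "uniform_measure lborel (cut_disk r \<alpha>)"
  have "AE p in ?U. p \<noteq> 0"
    using r \<alpha> AE_lborel_singleton[of 0] by (intro AE_uniform_measureI) auto
  then have "AE p in ?U. emeasure ?U {q. cross p q = 0} = 0"
  proof eventually_elim
    case (elim p)
    have "emeasure lborel (cut_disk r \<alpha> \<inter> {q. cross p q = 0}) = 0"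
      using line_null_sets[OF elim] by (auto intro: emeasure_eq_0)
    then show ?case
      using r \<alpha> by simp
  qed
  moreover have "prob_space ?U"
    using assms by (intro prob_space_uniform_measure) (auto simp: emeasure_cut_disk ennreal_mult_eq_top_iff)
  ultimately show ?thesis
    by (intro planar_prob_space.intro planar_prob_space_axioms.intro) simp_all
qed

section \<open>The angular integral\<close>

text \<open>The length of the part of the arc \<open>[\<alpha>, 2\<pi> - \<alpha>]\<close> lying in the half-turn
  \<open>(c, c + \<pi>)\<close> taken modulo \<open>2\<pi>\<close>.\<close>

definition left_arc_length :: "real \<Rightarrow> real \<Rightarrow> real" where
  "left_arc_length \<alpha> c = min pi (2*pi - \<alpha> - c) + max 0 (c - pi - \<alpha>)"

lemma left_arc_length_nonneg: "c \<le> 2*pi - \<alpha> \<Longrightarrow> 0 \<le> left_arc_length \<alpha> c"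
  by (simp add: left_arc_length_def)

lemma sin_pos_iff_two_turns:
  assumes "-2*pi < x" "x \<le> 2*pi"
  shows "sin x > 0 \<longleftrightarrow> (0 < x \<and> x < pi) \<or> x < -pi"
proof -
  consider "x < -pi" | "-pi \<le> x" "x \<le> 0" | "0 < x" "x < pi" | "pi \<le> x" by linarith
  then show ?thesis
  proof cases
    case 1
    have "sin x = sin (x + 2*pi)" by simp
    moreover have "sin (x + 2*pi) > 0" using 1 assms by (intro sin_gt_zero) auto
    ultimately show ?thesis using 1 by simp
  next
    case 2
    have "sin x = - sin (-x)" by simp
    moreover have "sin (-x) \<ge> 0" using 2 by (intro sin_ge_zero) auto
    ultimately show ?thesis using 2 by auto
  next
    case 3
    then show ?thesis using sin_gt_zero by auto
  next
    case 4
    have "sin x \<le> 0"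
    proof (cases "x = pi \<or> x = 2*pi")
      case True
      then show ?thesis by auto
    next
      case False
      then show ?thesis using 4 assms sin_lt_zero[of x] by force
    qed
    moreover have "\<not> x < -pi" using 4 pi_gt_zero by linarith
    ultimately show ?thesis using 4 by auto
  qed
qed

lemma left_arc_eq:
  assumes \<alpha>: "0 \<le> \<alpha>" "\<alpha> \<le> pi/2" and c: "\<alpha> \<le> c" "c \<le> 2*pi - \<alpha>" "c < 2*pi"
  shows "{\<alpha>..2*pi-\<alpha>} \<inter> {\<theta>. 0 < sin (\<theta> - c)}
    = (if c \<le> pi - \<alpha> then {c<..<c+pi} else {c<..2*pi-\<alpha>} \<union> {\<alpha>..<c-pi})"
proof -
  have sin: "0 < sin (\<theta> - c) \<longleftrightarrow> (0 < \<theta> - c \<and> \<theta> - c < pi) \<or> \<theta> - c < -pi"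
    if "\<theta> \<in> {\<alpha>..2*pi-\<alpha>}" for \<theta>
    using that c \<alpha> by (intro sin_pos_iff_two_turns) auto
  show ?thesis
  proof (cases "c \<le> pi - \<alpha>")
    case True
    then show ?thesis
      using sin \<alpha> c by (intro set_eqI iffI) auto
  next
    case False
    then show ?thesis
      using sin \<alpha> c by (intro set_eqI iffI) auto
  qed
qed

lemma emeasure_left_arc:
  assumes \<alpha>: "0 \<le> \<alpha>" "\<alpha> \<le> pi/2" and c: "\<alpha> \<le> c" "c \<le> 2*pi - \<alpha>" "c < 2*pi"
  shows "emeasure lborel ({\<alpha>..2*pi-\<alpha>} \<inter> {\<theta>. 0 < sin (\<theta> - c)}) = ennreal (left_arc_length \<alpha> c)"
proof (cases "c \<le> pi - \<alpha>")
  case True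
  then show ?thesis
    using \<alpha> by (simp add: left_arc_eq[OF \<alpha> c] left_arc_length_def)
next
  case False
  have "{c<..2*pi-\<alpha>} \<inter> {\<alpha>..<c-pi} = {}"
    by auto (smt (verit) pi_gt_zero)
  then have "emeasure lborel ({c<..2*pi-\<alpha>} \<union> {\<alpha>..<c-pi})
      = emeasure lborel {c<..2*pi-\<alpha>} + emeasure lborel {\<alpha>..<c-pi}"
    by (intro plus_emeasure[symmetric]) auto
  also have "\<dots> = ennreal (2*pi - \<alpha> - c) + ennreal (max 0 (c - pi - \<alpha>))"
    using c by (cases "\<alpha> \<le> c - pi") (auto simp: max_def)
  also have "\<dots> = ennreal (left_arc_length \<alpha> c)"
    using False c by (subst ennreal_plus[symmetric]) (auto simp: left_arc_length_def min_def)
  finally show ?thesis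
    using False by (simp add: left_arc_eq[OF \<alpha> c])
qed

lemma has_integral_power2_diff:
  fixes b x y :: real
  assumes "x \<le> y"
  shows "((\<lambda>\<theta>. (b - \<theta>)^2) has_integral ((b - x)^3 - (b - y)^3) / 3) {x..y}"
proof -
  define F where "F \<theta> = - ((b - \<theta>)^3 / 3)" for \<theta> :: real
  have "((\<lambda>\<theta>. (b - \<theta>)^2) has_integral F y - F x) {x..y}"
  proof (rule fundamental_theorem_of_calculus[OF assms])
    fix \<theta>
    show "(F has_vector_derivative (b - \<theta>)^2) (at \<theta> within {x..y})"
      unfolding F_def has_real_derivative_iff_has_vector_derivative[symmetric]
      by (auto intro!: derivative_eq_intros)
  qed
  then show ?thesis
    by (simp add: F_def diff_divide_distrib)
qed

lemma has_integral_left_arc_length_sq: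
  assumes \<alpha>: "0 \<le> \<alpha>" "\<alpha> \<le> pi/2"
  shows "((\<lambda>\<theta>. (left_arc_length \<alpha> \<theta>)^2) has_integral
     (pi^2 * (pi - 2*\<alpha>) + (pi^3 - (pi - 2*\<alpha>)^3) / 3 + (pi - 2*\<alpha>)^3)) {\<alpha>..2*pi-\<alpha>}"
proof -
  have "((\<lambda>\<theta>. pi^2) has_integral pi^2 * (pi - 2*\<alpha>)) {\<alpha>..pi-\<alpha>}"
    using has_integral_const_real[of "pi^2" \<alpha> "pi - \<alpha>"] \<alpha> by (simp add: mult.commute)
  then have "((\<lambda>\<theta>. (left_arc_length \<alpha> \<theta>)^2) has_integral pi^2 * (pi - 2*\<alpha>)) {\<alpha>..pi-\<alpha>}"
    by (rule has_integral_eq[rotated]) (use \<alpha> in \<open>simp add: left_arc_length_def\<close>)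
  moreover have "((\<lambda>\<theta>. (2*pi - \<alpha> - \<theta>)^2) has_integral (pi^3 - (pi - 2*\<alpha>)^3) / 3) {pi-\<alpha>..pi+\<alpha>}"
    using has_integral_power2_diff[of "pi - \<alpha>" "pi + \<alpha>" "2*pi - \<alpha>"] \<alpha> by simp
  then have "((\<lambda>\<theta>. (left_arc_length \<alpha> \<theta>)^2) has_integral (pi^3 - (pi - 2*\<alpha>)^3) / 3) {pi-\<alpha>..pi+\<alpha>}"
    by (rule has_integral_eq[rotated]) (use \<alpha> in \<open>simp add: left_arc_length_def\<close>)
  moreover have "((\<lambda>\<theta>. (pi - 2*\<alpha>)^2) has_integral (pi - 2*\<alpha>)^3) {pi+\<alpha>..2*pi-\<alpha>}"
    using has_integral_const_real[of "(pi - 2*\<alpha>)^2" "pi + \<alpha>" "2*pi - \<alpha>"] \<alpha>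
    by (simp add: power3_eq_cube power2_eq_square algebra_simps)
  then have "((\<lambda>\<theta>. (left_arc_length \<alpha> \<theta>)^2) has_integral (pi - 2*\<alpha>)^3) {pi+\<alpha>..2*pi-\<alpha>}"
    by (rule has_integral_eq[rotated]) (use \<alpha> in \<open>simp add: left_arc_length_def\<close>)
  ultimately show ?thesis
    using \<alpha> by (intro has_integral_combine) (auto intro: has_integral_combine)
qed

lemma emeasure_uniform_arc_left:
  assumes \<alpha>: "0 \<le> \<alpha>" "\<alpha> \<le> pi/2" and c: "\<alpha> \<le> c" "c \<le> 2*pi - \<alpha>" "c < 2*pi"
  shows "emeasure (uniform_measure lborel {\<alpha>..2*pi-\<alpha>}) {\<theta>. 0 < sin (\<theta> - c)}
    = ennreal (left_arc_length \<alpha> c / (2*pi - 2*\<alpha>))"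
proof -
  have "0 < 2*pi - 2*\<alpha>" "0 \<le> left_arc_length \<alpha> c"
    using \<alpha> c pi_gt_zero by (auto simp: left_arc_length_def)
  moreover have "{\<theta>. 0 < sin (\<theta> - c)} \<in> sets borel"
    by measurable
  ultimately show ?thesis
    using emeasure_left_arc[OF \<alpha> c] \<alpha> by (simp add: Int_commute divide_ennreal)
qed

lemma emeasure_uniform_arc_left_sq:
  assumes \<alpha>: "0 \<le> \<alpha>" "\<alpha> \<le> pi/2" and "c \<noteq> 2*pi"
  shows "emeasure (uniform_measure lborel {\<alpha>..2*pi-\<alpha>}) {\<theta>. 0 < sin (\<theta> - c)} ^ 2
      * indicator {\<alpha>..2*pi-\<alpha>} c
    = ennreal (indicator {\<alpha>..2*pi-\<alpha>} c * (left_arc_length \<alpha> c / (2*pi - 2*\<alpha>))^2)"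
proof (cases "c \<in> {\<alpha>..2*pi-\<alpha>}")
  case True
  then have "0 \<le> left_arc_length \<alpha> c / (2*pi - 2*\<alpha>)"
    using \<alpha> pi_gt_zero left_arc_length_nonneg[of c \<alpha>] by simp
  moreover have "emeasure (uniform_measure lborel {\<alpha>..2*pi-\<alpha>}) {\<theta>. 0 < sin (\<theta> - c)}
      = ennreal (left_arc_length \<alpha> c / (2*pi - 2*\<alpha>))"
    using True assms by (intro emeasure_uniform_arc_left[OF \<alpha>]) auto
  ultimately show ?thesis
    using True by (simp add: ennreal_power)
qed simp

text \<open>The value of \<open>\<integral> M(H p)\<^sup>2 dM(p)\<close> for the uniform law \<open>M\<close> on a cut disk with cut angle
  \<open>2\<alpha>\<close>, i.e. the probability that a given one of three such points is extreme.\<close>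

definition extreme_probability :: "real \<Rightarrow> real" where
  "extreme_probability \<alpha>
    = (pi^2 * (pi - 2*\<alpha>) + (pi^3 - (pi - 2*\<alpha>)^3) / 3 + (pi - 2*\<alpha>)^3) / (2*pi - 2*\<alpha>)^3"

lemma extreme_probability_nonneg:
  assumes "0 \<le> \<alpha>" "\<alpha> \<le> pi/2"
  shows "0 \<le> extreme_probability \<alpha>"
proof -
  have "(pi - 2*\<alpha>)^3 \<le> pi^3"
    using assms by (intro power_mono) auto
  moreover have "0 < 2*pi - 2*\<alpha>"
    using assms pi_gt_zero by linarith
  ultimately show ?thesis
    using assms by (simp add: extreme_probability_def)
qed

lemma nn_integral_uniform_arc_left_sq:
  assumes \<alpha>: "0 \<le> \<alpha>" "\<alpha> \<le> pi/2"
  defines "V \<equiv> uniform_measure lborel {\<alpha>..2*pi-\<alpha>}"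
  shows "(\<integral>\<^sup>+\<theta>. emeasure V {\<phi>. 0 < sin (\<phi> - \<theta>)} ^ 2 \<partial>V) = ennreal (extreme_probability \<alpha>)"
proof -
  define L where "L = 2*pi - 2*\<alpha>"
  define K where "K = pi^2 * (pi - 2*\<alpha>) + (pi^3 - (pi - 2*\<alpha>)^3) / 3 + (pi - 2*\<alpha>)^3"
  have L: "0 < L"
    unfolding L_def using \<alpha> pi_gt_zero by linarith
  have K: "0 \<le> K"
    using extreme_probability_nonneg[OF \<alpha>] L
    by (simp add: extreme_probability_def K_def L_def zero_le_divide_iff)
  have "(\<integral>\<^sup>+\<theta>. emeasure V {\<phi>. 0 < sin (\<phi> - \<theta>)} ^ 2 \<partial>V)
      = (\<integral>\<^sup>+\<theta>. emeasure V {\<phi>. 0 < sin (\<phi> - \<theta>)} ^ 2 * indicator {\<alpha>..2*pi-\<alpha>} \<theta> \<partial>lborel)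
        / emeasure lborel {\<alpha>..2*pi-\<alpha>}"
    unfolding V_def by (rule nn_integral_uniform_measure) auto
  also have "(\<integral>\<^sup>+\<theta>. emeasure V {\<phi>. 0 < sin (\<phi> - \<theta>)} ^ 2 * indicator {\<alpha>..2*pi-\<alpha>} \<theta> \<partial>lborel)
      = (\<integral>\<^sup>+\<theta>. ennreal (indicator {\<alpha>..2*pi-\<alpha>} \<theta> * (left_arc_length \<alpha> \<theta> / L)^2) \<partial>lborel)"
    \<comment> \<open>the pointwise identity is only proved away from the null point \<open>2\<pi>\<close>, which lies in
      the arc when \<open>\<alpha> = 0\<close>\<close>
    unfolding V_def L_def using AE_lborel_singleton[of "2*pi"]
    by (rule nn_integral_cong_AE[OF AE_mp], intro AE_I2 impI)
       (rule emeasure_uniform_arc_left_sq[OF \<alpha>])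
  also have "\<dots> = ennreal (K / L^2)"
  proof (rule nn_integral_has_integral_lebesgue)
    have "((\<lambda>\<theta>. (left_arc_length \<alpha> \<theta>)^2 * (1 / L^2)) has_integral K * (1 / L^2)) {\<alpha>..2*pi-\<alpha>}"
      unfolding K_def by (rule has_integral_mult_left[OF has_integral_left_arc_length_sq[OF \<alpha>]])
    then show "((\<lambda>\<theta>. (left_arc_length \<alpha> \<theta> / L)^2) has_integral K / L^2) {\<alpha>..2*pi-\<alpha>}"
      by (simp add: power_divide)
  qed simp
  also have "emeasure lborel {\<alpha>..2*pi-\<alpha>} = ennreal L"
    using L by (simp add: L_def)
  also have "ennreal (K / L^2) / ennreal L = ennreal (K / L^3)"
    using K L by (simp add: divide_ennreal power3_eq_cube power2_eq_square)
  finally show ?thesis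
    by (simp add: K_def L_def extreme_probability_def)
qed

lemma emeasure_uniform_cut_disk_origin:
  assumes "0 \<le> r" "0 \<le> \<alpha>" "\<alpha> \<le> pi"
  shows "emeasure (uniform_measure lborel (cut_disk r \<alpha>)) {0} = 0"
proof -
  have "emeasure lborel (cut_disk r \<alpha> \<inter> {0}) = 0"
    by (rule emeasure_lborel_countable) simp
  then show ?thesis
    using assms by (subst emeasure_uniform_measure) auto
qed

theorem prob_zero_in_triangle_cut_disk:
  assumes "0 < r" "0 \<le> \<alpha>" "\<alpha> \<le> pi/2"
  defines "U \<equiv> uniform_measure lborel (cut_disk r \<alpha>)"
  shows "measure (U \<Otimes>\<^sub>M U \<Otimes>\<^sub>M U) {(p, q, s). (0::real \<times> real) \<in> convex hull {p, q, s}}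
    = 1 - 3 * extreme_probability \<alpha>"
proof -
  have \<alpha>: "\<alpha> < pi"
    using assms pi_gt_zero by linarith
  interpret planar_prob_space U
    unfolding U_def using assms \<alpha> by (intro planar_prob_space_uniform_cut_disk)
  have "emeasure U {0} = 0"
    unfolding U_def using assms \<alpha> by (intro emeasure_uniform_cut_disk_origin) auto
  then have "(\<integral>\<^sup>+p. left_measure p ^ 2 \<partial>U)
      = (\<integral>\<^sup>+\<theta>. emeasure angle_distr {\<phi>. 0 < sin (\<phi> - \<theta>)} ^ 2 \<partial>angle_distr)"
    by (rule nn_integral_left_measure_sq_angle_distr)
  also have "angle_distr = uniform_measure lborel {\<alpha>..2*pi - \<alpha>}"
    unfolding U_def using assms \<alpha> by (intro distr_uniform_cut_disk_polar_angle)
  also have "(\<integral>\<^sup>+\<theta>. emeasure (uniform_measure lborel {\<alpha>..2*pi - \<alpha>}) {\<phi>. 0 < sin (\<phi> - \<theta>)} ^ 2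
      \<partial>uniform_measure lborel {\<alpha>..2*pi - \<alpha>}) = ennreal (extreme_probability \<alpha>)"
    using assms by (intro nn_integral_uniform_arc_left_sq)
  finally have "(\<integral>\<^sup>+p. left_measure p ^ 2 \<partial>U) = ennreal (extreme_probability \<alpha>)" .
  then show ?thesis
    unfolding prob_zero_in_triangle using extreme_probability_nonneg assms(2,3) by simp
qed

lemma cut_disk_probability_formula:
  fixes a :: real
  assumes "0 \<le> a" "a \<le> 1/2"
  shows "1 - 3 * extreme_probability (pi * a) = (1 + a) * (1 - 2*a)^2 / (4 * (1 - a)^3)"
proof -
  define k where "k = 3 * (1 - 2*a) + (1 - (1 - 2*a)^3) + 3 * (1 - 2*a)^3"
  define D where "D = (1 - a)^3"
  have t3: "3 * (X + Y / 3 + Z) = 3*X + Y + 3*Z" for X Y Z :: real by simp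
  have K: "3 * (pi^2 * (pi - 2*(pi*a)) + (pi^3 - (pi - 2*(pi*a))^3) / 3 + (pi - 2*(pi*a))^3) = pi^3 * k"
    unfolding t3 by (simp add: k_def power3_eq_cube power2_eq_square algebra_simps)
  have Lc: "(2*pi - 2*(pi*a))^3 = pi^3 * (8 * D)"
    by (simp add: D_def power3_eq_cube algebra_simps)
  have D0: "D > 0" using assms by (simp add: D_def)
  have poly: "8 * D - k = 2 * ((1 + a) * (1 - 2*a)^2)"
    by (simp add: k_def D_def power3_eq_cube power2_eq_square algebra_simps)
  have "3 * extreme_probability (pi * a) = k / (8 * D)"
    unfolding extreme_probability_def times_divide_eq_right K Lc by simp
  moreover have "1 - k / (8 * D) = (8 * D - k) / (8 * D)" using D0 by (simp add: field_simps)
  moreover have "(8 * D - k) / (8 * D) = (1 + a) * (1 - 2*a)^2 / (4 * D)"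
    unfolding poly using D0 by simp
  ultimately show ?thesis by (simp add: D_def)
qed

theorem mainTheorem7:
  fixes r a :: real
  assumes "r > 0" and "0 \<le> a" and "a \<le> 1/2"
  defines "U \<equiv> uniform_on (cut_disk r (pi * a))"
  shows "measure (U \<Otimes>\<^sub>M U \<Otimes>\<^sub>M U)
           {(p, q, s). (0::real \<times> real) \<in> convex hull {p, q, s}}
         = (1 + a) * (1 - 2*a)^2 / (4 * (1 - a)^3)"
proof -
  have "0 \<le> pi * a" "pi * a \<le> pi/2"
    using assms by auto
  then show ?thesis
    unfolding U_def uniform_on_def using assms
    by (simp add: prob_zero_in_triangle_cut_disk cut_disk_probability_formula)
qed

end
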